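(* Let $n\geqslant 2$ and let $\alpha$ be a partial cofinite isometry of $\mathbb{N}^n$ such that for every $i\in\{1,\ldots,n\}$ there is some $\mathbf{m}_i\in\operatorname{dom}\alpha\setminus\{\mathbf{1}\}$ (with $m\in\mathbb{N}$) satisfying $(\mathbf{m}_i)\alpha\in\vec{\mathbf{1}}_i$. Then $(\mathbf{x}_i)\alpha=\mathbf{x}_i$ for every $i\in\{1,\ldots,n\}$ and every $\mathbf{x}_i\in\operatorname{dom}\alpha\cap\vec{\mathbf{1}}_i$.
   Context: $\mathbb{N}=\{1,2,3,\ldots\}$ and $\mathbb{N}^n$ carries the Euclidean metric $d$. A partial isometry of $\mathbb{N}^n$ is an injective partial map $\alpha\colon\mathbb{N}^n\rightharpoonup\mathbb{N}^n$ with $d((\mathbf{x})\alpha,(\mathbf{y})\alpha)=d(\mathbf{x},\mathbf{y})$ for all $\mathbf{x},\mathbf{y}\in\operatorname{dom}\alpha$; it is cofinite if $\mathbb{N}^n\setminus\operatorname{dom}\alpha$ and $\mathbb{N}^n\setminus\operatorname{ran}\alpha$ are finite. Maps are written on the right. $\mathbf{1}=(1,\ldots,1)$; for $k\in\mathbb{N}$ and $j\in\{1,\ldots,n\}$, $\mathbf{k}_j$ is the point whose $j$-th coordinate is $k$ and all other coordinates equal $1$; $\vec{\mathbf{1}}_j=\{\mathbf{k}_j\colon k\in\mathbb{N}\}$. *)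

theory Defs
  imports "HOL-Analysis.Analysis"
begin

text \<open>Points of N^n (N = {1,2,...}) are vectors nat^'n with all coordinates >= 1;
  the dimension n is CARD('n).\<close>

definition NN :: "(nat ^ 'n) set" where
  "NN = {x. \<forall>j. 1 \<le> x $ j}"

definition dN :: "nat ^ 'n \<Rightarrow> nat ^ 'n \<Rightarrow> real" where
  "dN x y = sqrt (\<Sum>j\<in>UNIV. (real (x $ j) - real (y $ j))^2)"

text \<open>A partial map is a map into option; maps are written on the right in the paper,
  here (x)alpha is alpha x.\<close>

definition partial_isometry :: "(nat ^ 'n \<Rightarrow> (nat ^ 'n) option) \<Rightarrow> bool" where
  "partial_isometry \<alpha> \<longleftrightarrow>
     dom \<alpha> \<subseteq> NN \<and> ran \<alpha> \<subseteq> NN \<and> inj_on \<alpha> (dom \<alpha>) \<and>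
     (\<forall>x\<in>dom \<alpha>. \<forall>y\<in>dom \<alpha>. dN (the (\<alpha> x)) (the (\<alpha> y)) = dN x y)"

definition cofinite_pmap :: "(nat ^ 'n \<Rightarrow> (nat ^ 'n) option) \<Rightarrow> bool" where
  "cofinite_pmap \<alpha> \<longleftrightarrow> finite (NN - dom \<alpha>) \<and> finite (NN - ran \<alpha>)"

definition ones :: "nat ^ 'n" where
  "ones = (\<chi> j. 1)"

definition axis_pt :: "'n \<Rightarrow> nat \<Rightarrow> nat ^ 'n" where
  "axis_pt i k = (\<chi> j. if j = i then k else 1)"

definition ray :: "'n \<Rightarrow> (nat ^ 'n) set" where
  "ray i = {axis_pt i k | k. 1 \<le> k}"

end

theory Submission
  imports Defs
begin

text \<open>An isometry sends two lattice neighbours p, p + e_j to lattice neighbours, which differ in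
  a single coordinate k. Comparing squared distances from an arbitrary x to the two neighbours
  shows that the k-th coordinate of the image of x is c + x_j or c - x_j. The far points of the
  j-th axis lie in the cofinite domain and their images have positive coordinates, so the sign
  is +; axis points in other directions, of the domain and of the range, force c = 0. Thus every
  coordinate reappears unchanged as some coordinate of the image. An axis point other than ones
  mapped into its own ray shows that coordinate i reappears as coordinate i, so \<alpha> is the
  identity on its domain.\<close>

definition sqdist :: "nat ^ 'n \<Rightarrow> nat ^ 'n \<Rightarrow> real" where
  "sqdist x y = (\<Sum>j\<in>UNIV. (real (x $ j) - real (y $ j))^2)"

lemma dN_squared: "(dN x y)^2 = sqdist x y"
  unfolding dN_def sqdist_def by (simp add: sum_nonneg)

lemma partial_isometry_sqdist:
  assumes "partial_isometry \<alpha>" "x \<in> dom \<alpha>" "y \<in> dom \<alpha>"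
  shows "sqdist (the (\<alpha> x)) (the (\<alpha> y)) = sqdist x y"
  using assms unfolding partial_isometry_def by (metis dN_squared)

lemma sqdist_diff_agree_outside:
  assumes "\<forall>l. l \<noteq> k \<longrightarrow> U $ l = V $ l"
  shows "sqdist U W - sqdist V W
           = (real (U $ k) - real (W $ k))^2 - (real (V $ k) - real (W $ k))^2"
proof -
  have "sqdist U W - sqdist V W
          = (\<Sum>l\<in>UNIV. (real (U $ l) - real (W $ l))^2 - (real (V $ l) - real (W $ l))^2)"
    unfolding sqdist_def by (simp add: sum_subtractf)
  also have "\<dots> = (real (U $ k) - real (W $ k))^2 - (real (V $ k) - real (W $ k))^2"
    by (subst sum.remove[of UNIV k]) (auto simp: assms)
  finally show ?thesis .
qed

lemma sqdist_eq_1_imp_unit_step: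
  assumes "sqdist Q P = 1"
  obtains k where "\<forall>l. l \<noteq> k \<longrightarrow> Q $ l = P $ l" "(real (Q $ k) - real (P $ k))^2 = 1"
proof -
  define g where "g l = (real (Q $ l) - real (P $ l))^2" for l
  have g_nonneg: "g l \<ge> 0" for l
    by (simp add: g_def)
  have g_sum: "sum g UNIV = 1"
    using assms by (simp add: sqdist_def g_def)
  then obtain k where "Q $ k \<noteq> P $ k"
    by (metis (no_types, lifting) g_def sum.neutral diff_self power_zero_numeral zero_neq_one)
  then have "1 \<le> \<bar>real (Q $ k) - real (P $ k)\<bar>"
    by linarith
  then have gk: "g k \<ge> 1"
    unfolding g_def by (metis abs_le_square_iff abs_one one_power2)
  have "sum g UNIV = g k + sum g (UNIV - {k})"
    by (simp add: sum.remove)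
  moreover have "sum g (UNIV - {k}) \<ge> 0"
    by (simp add: sum_nonneg g_nonneg)
  ultimately have "g k = 1" "sum g (UNIV - {k}) = 0"
    using g_sum gk by linarith+
  moreover from this(2) have "\<forall>l. l \<noteq> k \<longrightarrow> Q $ l = P $ l"
    using sum_nonneg_eq_0_iff[of "UNIV - {k}" g] g_nonneg by (auto simp: g_def)
  ultimately show ?thesis
    using that unfolding g_def by blast
qed

lemma partial_isometry_coordinate_affine:
  assumes iso: "partial_isometry \<alpha>" and dom: "p \<in> dom \<alpha>" "q \<in> dom \<alpha>"
    and step: "\<forall>l. l \<noteq> j \<longrightarrow> q $ l = p $ l" "q $ j = p $ j + 1"
  obtains k c d where "d^2 = 1"
    "\<forall>x\<in>dom \<alpha>. real (the (\<alpha> x) $ k) = c + d * real (x $ j)"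
proof -
  define A where "A x = the (\<alpha> x)" for x
  have "sqdist q p = 1"
    using sqdist_diff_agree_outside[OF step(1), of p] step(2) by (simp add: sqdist_def)
  then have "sqdist (A q) (A p) = 1"
    using partial_isometry_sqdist[OF iso] dom by (simp add: A_def)
  then obtain k where agree: "\<forall>l. l \<noteq> k \<longrightarrow> A q $ l = A p $ l"
    and unit: "(real (A q $ k) - real (A p $ k))^2 = 1"
    by (rule sqdist_eq_1_imp_unit_step)
  define d where "d = real (A q $ k) - real (A p $ k)"
  have "real (A x $ k) = (real (A p $ k) - d * real (p $ j)) + d * real (x $ j)"
    if x: "x \<in> dom \<alpha>" for x
  proof -
    \<comment> \<open>the difference of the squared distances from x to two neighbours is affine in x\<close>
    have "sqdist (A q) (A x) - sqdist (A p) (A x) = sqdist q x - sqdist p x"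
      using partial_isometry_sqdist[OF iso] x dom by (simp add: A_def)
    then have "(real (A p $ k) + d - real (A x $ k))^2 - (real (A p $ k) - real (A x $ k))^2
             = (1 + real (p $ j) - real (x $ j))^2 - (real (p $ j) - real (x $ j))^2"
      by (simp add: sqdist_diff_agree_outside[OF agree] sqdist_diff_agree_outside[OF step(1)]
          step(2) d_def)
    then have "d * (real (A p $ k) - real (A x $ k)) = real (p $ j) - real (x $ j)"
      using unit by (simp add: d_def power2_eq_square algebra_simps)
    then have "d * d * (real (A p $ k) - real (A x $ k)) = d * (real (p $ j) - real (x $ j))"
      by (simp add: mult.assoc)
    moreover have "d * d = 1"
      using unit by (simp add: d_def power2_eq_square)
    ultimately show ?thesis
      by (simp add: algebra_simps)
  qed
  then show ?thesis
    using that unit unfolding A_def d_def by blast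
qed

lemma axis_pt_nth [simp]: "axis_pt i k $ j = (if j = i then k else 1)"
  unfolding axis_pt_def by simp

lemma axis_pt_eq_ones_iff: "axis_pt i m = ones \<longleftrightarrow> m = 1"
  unfolding ones_def vec_eq_iff by (metis (full_types) axis_pt_nth vec_lambda_beta)

lemma cofinite_eventually_axis_pt:
  assumes "finite (NN - S)"
  shows "\<forall>\<^sub>F t in sequentially. axis_pt j t \<in> S"
proof -
  have "axis_pt j ` {t. 1 \<le> t \<and> axis_pt j t \<notin> S} \<subseteq> NN - S"
    by (auto simp: NN_def)
  moreover have "inj (axis_pt j)"
    by (rule injI) (metis axis_pt_nth)
  ultimately have "finite {t. 1 \<le> t \<and> axis_pt j t \<notin> S}"
    using assms by (meson finite_imageD finite_subset inj_on_subset subset_UNIV)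
  then have "finite (insert 0 {t. 1 \<le> t \<and> axis_pt j t \<notin> S})"
    by simp
  then have "finite {t. axis_pt j t \<notin> S}"
    by (rule finite_subset[rotated]) auto
  then show ?thesis
    by (simp add: eventually_cofinite flip: cofinite_eq_sequentially)
qed

lemma exists_other_index:
  fixes j :: "'n::finite"
  assumes "CARD('n) \<ge> 2"
  obtains l where "l \<noteq> j"
proof -
  have "\<not> CARD('n) \<le> Suc 0"
    using assms by simp
  then obtain a b :: 'n where "a \<noteq> b"
    using card_le_Suc0_iff_eq[of "UNIV :: 'n set"] by auto
  then show ?thesis
    using that[of a] that[of b] by blast
qed

lemma partial_isometry_coords_ge_1:
  assumes "partial_isometry \<alpha>" "x \<in> dom \<alpha>"
  shows "1 \<le> x $ l" "1 \<le> the (\<alpha> x) $ l"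
proof -
  have "the (\<alpha> x) \<in> ran \<alpha>"
    using assms(2) by (auto simp: ran_def)
  then show "1 \<le> x $ l" "1 \<le> the (\<alpha> x) $ l"
    using assms unfolding partial_isometry_def NN_def by auto
qed

lemma cofinite_partial_isometry_coordinate_shift:
  assumes iso: "partial_isometry \<alpha>" and cof: "finite (NN - dom \<alpha>)"
  obtains k c where "\<forall>x\<in>dom \<alpha>. real (the (\<alpha> x) $ k) = c + real (x $ j)"
proof -
  obtain N where N: "\<forall>t\<ge>N. axis_pt j t \<in> dom \<alpha>"
    using cofinite_eventually_axis_pt[OF cof] unfolding eventually_sequentially by blast
  obtain k c d where "d^2 = 1"
    and affine: "\<forall>x\<in>dom \<alpha>. real (the (\<alpha> x) $ k) = c + d * real (x $ j)"
    by (rule partial_isometry_coordinate_affine[OF iso, of "axis_pt j N" "axis_pt j (N + 1)" j])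
      (use N in auto)
  have "d \<noteq> -1"
  proof
    assume "d = -1"
    define t where "t = max N (nat \<lceil>c\<rceil>)"
    have t: "axis_pt j t \<in> dom \<alpha>"
      using N by (simp add: t_def)
    then have "1 \<le> real (the (\<alpha> (axis_pt j t)) $ k)"
      using partial_isometry_coords_ge_1(2)[OF iso] by simp
    moreover have "real (the (\<alpha> (axis_pt j t)) $ k) = c - real t"
      using affine t \<open>d = -1\<close> by simp
    moreover have "c \<le> real (nat \<lceil>c\<rceil>)"
      by (rule real_nat_ceiling_ge)
    moreover have "real (nat \<lceil>c\<rceil>) \<le> real t"
      by (simp add: t_def)
    ultimately show False
      by linarith
  qed
  then have "d = 1"
    using \<open>d^2 = 1\<close> by (simp add: power2_eq_1_iff)
  then show ?thesis
    using that affine by simp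
qed

lemma cofinite_partial_isometry_coordinate:
  fixes \<alpha> :: "nat ^ 'n \<Rightarrow> (nat ^ 'n) option"
  assumes card: "CARD('n) \<ge> 2" and iso: "partial_isometry \<alpha>" and cof: "cofinite_pmap \<alpha>"
  obtains k where "\<forall>x\<in>dom \<alpha>. the (\<alpha> x) $ k = x $ j"
proof -
  have dom_axis: "\<forall>\<^sub>F t in sequentially. axis_pt l t \<in> dom \<alpha>" for l
    using cof cofinite_eventually_axis_pt unfolding cofinite_pmap_def by blast
  have ran_axis: "\<forall>\<^sub>F t in sequentially. axis_pt l t \<in> ran \<alpha>" for l
    using cof cofinite_eventually_axis_pt unfolding cofinite_pmap_def by blast
  obtain k c where shift: "\<forall>x\<in>dom \<alpha>. real (the (\<alpha> x) $ k) = c + real (x $ j)"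
    using cofinite_partial_isometry_coordinate_shift[OF iso] cof
    unfolding cofinite_pmap_def by blast
  have "c \<ge> 0"
  proof -
    obtain l where "l \<noteq> j"
      using exists_other_index[OF card] .
    obtain t where t: "axis_pt l t \<in> dom \<alpha>"
      using eventually_happens'[OF sequentially_bot dom_axis] by blast
    then have "1 \<le> real (the (\<alpha> (axis_pt l t)) $ k)"
      using partial_isometry_coords_ge_1(2)[OF iso] by simp
    moreover have "real (the (\<alpha> (axis_pt l t)) $ k) = c + 1"
      using shift t \<open>l \<noteq> j\<close> by simp
    ultimately show ?thesis
      by linarith
  qed
  moreover have "c \<le> 0"
  proof -
    obtain l where "l \<noteq> k"
      using exists_other_index[OF card] .
    then obtain t where "axis_pt l t \<in> ran \<alpha>"
      using eventually_happens'[OF sequentially_bot ran_axis] by blast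
    then obtain x where "\<alpha> x = Some (axis_pt l t)"
      unfolding ran_def by blast
    then have x_dom: "x \<in> dom \<alpha>" and "the (\<alpha> x) $ k = 1"
      using \<open>l \<noteq> k\<close> by auto
    then have "1 = c + real (x $ j)"
      using shift[rule_format, OF x_dom] by simp
    moreover have "1 \<le> real (x $ j)"
      using partial_isometry_coords_ge_1(1)[OF iso x_dom] by simp
    ultimately show ?thesis
      by linarith
  qed
  ultimately show ?thesis
    using that[of k] shift by simp
qed

lemma ray_image_fixes_coordinate:
  assumes "\<forall>x\<in>dom \<alpha>. the (\<alpha> x) $ k = x $ i"
    and "axis_pt i m \<in> dom \<alpha> - {ones}" "the (\<alpha> (axis_pt i m)) \<in> ray i"
  shows "k = i"
proof (rule ccontr)
  assume "k \<noteq> i"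
  obtain m' where "the (\<alpha> (axis_pt i m)) = axis_pt i m'"
    using assms(3) unfolding ray_def by blast
  then have "m = 1"
    using assms(1,2) \<open>k \<noteq> i\<close> by (metis DiffD1 axis_pt_nth)
  then show False
    using assms(2) axis_pt_eq_ones_iff by blast
qed

theorem lemma2p8:
  fixes \<alpha> :: "nat ^ 'n \<Rightarrow> (nat ^ 'n) option"
  assumes "CARD('n) \<ge> 2"
    and "partial_isometry \<alpha>"
    and "cofinite_pmap \<alpha>"
    and "\<forall>i. \<exists>m. 1 \<le> m \<and> axis_pt i m \<in> dom \<alpha> - {ones}
                  \<and> the (\<alpha> (axis_pt i m)) \<in> ray i"
  shows "\<forall>i. \<forall>x \<in> dom \<alpha> \<inter> ray i. \<alpha> x = Some x"
proof -
  have "\<forall>i. \<exists>k. \<forall>x\<in>dom \<alpha>. the (\<alpha> x) $ k = x $ i"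
    using cofinite_partial_isometry_coordinate[OF assms(1-3)] by metis
  then obtain \<sigma> where \<sigma>: "\<forall>i. \<forall>x\<in>dom \<alpha>. the (\<alpha> x) $ \<sigma> i = x $ i"
    by metis
  have "\<sigma> i = i" for i
    using assms(4) ray_image_fixes_coordinate \<sigma> by metis
  then have "the (\<alpha> x) = x" if "x \<in> dom \<alpha>" for x
    using \<sigma> that by (simp add: vec_eq_iff)
  then show ?thesis
    by (metis IntD1 domIff option.collapse)
qed

end
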